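(* Let $\mathcal K_{\texttt{SFL}}$ be a nonempty finite set of clients, and for each $\tilde k\in\mathcal K_{\texttt{SFL}}$ let $$a_{\tilde k}=I_{\tilde k}|\mathcal B_{\tilde k}|(F^{\mathrm S}_{\tilde k}+B^{\mathrm S}_{\tilde k})>0,\qquad c_{\tilde k}=\frac{I_{\tilde k}|\mathcal B_{\tilde k}|(F^{\mathrm C}_{\tilde k}+B^{\mathrm C}_{\tilde k})}{f^{\mathrm C}_{\tilde k}}+2\,\frac{I_{\tilde k}|\mathcal B_{\tilde k}|\Lambda_{\tilde k}+|\mathbf w^{\mathrm C}_{\tilde k}|}{r_{\tilde k}}.$$ For $F^{\max}>0$, let $T_\theta=T_\theta(F^{\max})>\max_{\tilde k}c_{\tilde k}$ be defined by the equation $$\sum_{\tilde k\in\mathcal K_{\texttt{SFL}}}\frac{a_{\tilde k}}{T_\theta-c_{\tilde k}}=F^{\max}.$$ Then $T_\theta$ is strictly convex with respect to $F^{\max}$.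
   Context: Split federated learning setting: $F^{\max}$ is the total computing power of the server; for each client $\tilde k$, $I_{\tilde k}$ is the number of local epochs, $|\mathcal B_{\tilde k}|$ the mini-batch size, $F^{\mathrm C}_{\tilde k},B^{\mathrm C}_{\tilde k}\geqslant 0$ and $F^{\mathrm S}_{\tilde k},B^{\mathrm S}_{\tilde k}\geqslant 0$ the per-sample forward/backward computation of the client-side and server-side models, $f^{\mathrm C}_{\tilde k}>0$ the client computing power, $r_{\tilde k}>0$ the data rate, $\Lambda_{\tilde k}\geqslant0$ the per-sample intermediate-result size and $|\mathbf w^{\mathrm C}_{\tilde k}|\geqslant 0$ the client-side model size. $T_\theta$ is the common latency of the clients in $\mathcal K_{\texttt{SFL}}$ when the server's resources are fully allocated among them. *)

theory Defs
  imports "HOL-Analysis.Analysis"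
begin

definition strictly_convex_on :: "real set \<Rightarrow> (real \<Rightarrow> real) \<Rightarrow> bool" where
  "strictly_convex_on S f \<longleftrightarrow>
     (\<forall>x\<in>S. \<forall>y\<in>S. \<forall>u::real. x \<noteq> y \<and> 0 < u \<and> u < 1 \<longrightarrow>
        f (u * x + (1 - u) * y) < u * f x + (1 - u) * f y)"

definition T_theta :: "'k set \<Rightarrow> ('k \<Rightarrow> real) \<Rightarrow> ('k \<Rightarrow> real) \<Rightarrow> real \<Rightarrow> real" where
  "T_theta K a c F = (THE T. (\<forall>k\<in>K. T > c k) \<and> (\<Sum>k\<in>K. a k / (T - c k)) = F)"

end

theory Submission
  imports Defs
begin

text \<open>The pole sum \<open>T \<mapsto> \<Sum>k\<in>K. a k / (T - c k)\<close> is a positive combination of translated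
  hyperbolas, hence strictly decreasing and strictly convex on \<open>T > max c\<close>, and \<open>T_theta K a c\<close>
  is its inverse. For such a function the inverse is strictly convex: at the convex combination
  \<open>T\<^sub>m\<close> of \<open>T_theta x\<close> and \<open>T_theta y\<close> the pole sum lies strictly below \<open>u * x + (1 - u) * y\<close>,
  its value at \<open>T_theta (u * x + (1 - u) * y)\<close>, so by monotonicity \<open>T\<^sub>m\<close> lies strictly to the right.\<close>

definition pole_sum :: "'k set \<Rightarrow> ('k \<Rightarrow> real) \<Rightarrow> ('k \<Rightarrow> real) \<Rightarrow> real \<Rightarrow> real" where
  "pole_sum K a c T = (\<Sum>k\<in>K. a k / (T - c k))"

lemma strictly_convex_on_subset:
  "strictly_convex_on S f \<Longrightarrow> T \<subseteq> S \<Longrightarrow> strictly_convex_on T f"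
  unfolding strictly_convex_on_def by blast

lemma strictly_convex_on_sum:
  assumes "finite K" "K \<noteq> {}" "\<And>k. k \<in> K \<Longrightarrow> strictly_convex_on S (f k)"
  shows "strictly_convex_on S (\<lambda>x. \<Sum>k\<in>K. f k x)"
  unfolding strictly_convex_on_def
proof (intro ballI allI impI)
  fix x y u :: real assume "x \<in> S" "y \<in> S" and xyu: "x \<noteq> y \<and> 0 < u \<and> u < 1"
  then have "(\<Sum>k\<in>K. f k (u * x + (1 - u) * y)) < (\<Sum>k\<in>K. u * f k x + (1 - u) * f k y)"
    using assms by (intro sum_strict_mono) (auto simp: strictly_convex_on_def)
  then show "(\<Sum>k\<in>K. f k (u * x + (1 - u) * y)) < u * (\<Sum>k\<in>K. f k x) + (1 - u) * (\<Sum>k\<in>K. f k y)"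
    by (simp add: sum.distrib sum_distrib_left)
qed

lemma inverse_strict_jensen:
  fixes s t u :: real
  assumes "s > 0" "t > 0" "s \<noteq> t" "0 < u" "u < 1"
  shows "1 / (u * s + (1 - u) * t) < u / s + (1 - u) / t"
proof -
  have mean_pos: "u * s + (1 - u) * t > 0" using assms by (intro add_pos_pos) auto
  have "(u * s + (1 - u) * t) * (u * t + (1 - u) * s) - s * t = u * (1 - u) * (s - t)\<^sup>2"
    by (simp add: algebra_simps power2_eq_square)
  moreover have "u * (1 - u) * (s - t)\<^sup>2 > 0" using assms by simp
  ultimately have "s * t < (u * s + (1 - u) * t) * (u * t + (1 - u) * s)" by linarith
  then have "1 / (u * s + (1 - u) * t) < (u * t + (1 - u) * s) / (s * t)"
    using mean_pos assms by (simp add: divide_simps mult.commute)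
  also have "\<dots> = u / s + (1 - u) / t" using assms by (simp add: field_simps)
  finally show ?thesis .
qed

lemma strictly_convex_on_pole:
  fixes a c :: real
  assumes "a > 0"
  shows "strictly_convex_on {c<..} (\<lambda>T. a / (T - c))"
  unfolding strictly_convex_on_def
proof (intro ballI allI impI)
  fix x y u :: real assume "x \<in> {c<..}" "y \<in> {c<..}" and xyu: "x \<noteq> y \<and> 0 < u \<and> u < 1"
  then have "a * (1 / (u * (x - c) + (1 - u) * (y - c))) < a * (u / (x - c) + (1 - u) / (y - c))"
    using assms by (intro mult_strict_left_mono inverse_strict_jensen) auto
  moreover have "u * (x - c) + (1 - u) * (y - c) = u * x + (1 - u) * y - c"
    by (simp add: algebra_simps)
  ultimately show "a / (u * x + (1 - u) * y - c) < u * (a / (x - c)) + (1 - u) * (a / (y - c))"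
    by (simp add: algebra_simps)
qed

lemma pole_sum_strictly_convex:
  assumes "finite K" "K \<noteq> {}" "\<And>k. k \<in> K \<Longrightarrow> a k > 0"
  shows "strictly_convex_on (\<Inter>k\<in>K. {c k<..}) (pole_sum K a c)"
  unfolding pole_sum_def
  using assms by (intro strictly_convex_on_sum strictly_convex_on_subset[OF strictly_convex_on_pole]) auto

lemma pole_sum_strict_antimono:
  assumes "finite K" "K \<noteq> {}" "\<And>k. k \<in> K \<Longrightarrow> a k > 0"
  shows "strict_antimono_on (\<Inter>k\<in>K. {c k<..}) (pole_sum K a c)"
proof (rule monotone_onI)
  fix s t assume "s \<in> (\<Inter>k\<in>K. {c k<..})" "s < t"
  then show "pole_sum K a c t < pole_sum K a c s"
    unfolding pole_sum_def using assms
    by (intro sum_strict_mono divide_strict_left_mono) (auto intro: mult_pos_pos)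
qed

lemma pole_sum_attains:
  assumes fin: "finite K" and ne: "K \<noteq> {}" and a_pos: "\<And>k. k \<in> K \<Longrightarrow> a k > 0"
    and "F > 0"
  shows "\<exists>T \<in> (\<Inter>k\<in>K. {c k<..}). pole_sum K a c T = F"
proof -
  define M where "M = Max (c ` K)"
  have c_le_M: "c k \<le> M" if "k \<in> K" for k using fin that unfolding M_def by auto
  have "M \<in> c ` K" unfolding M_def using fin ne by (intro Max_in) auto
  then obtain k0 where k0: "k0 \<in> K" "c k0 = M" by (metis imageE)
  define S where "S = (\<Sum>k\<in>K. a k)"
  have a_nonneg: "a k \<ge> 0" if "k \<in> K" for k using a_pos[OF that] by simp
  have "a k0 \<le> S" unfolding S_def using fin k0 a_nonneg by (intro member_le_sum) auto
  define T1 where "T1 = M + a k0 / F"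
  define T2 where "T2 = M + S / F"
  have "M < T1" unfolding T1_def using a_pos[OF k0(1)] \<open>F > 0\<close> by simp
  have "T1 \<le> T2"
    unfolding T1_def T2_def using \<open>a k0 \<le> S\<close> \<open>F > 0\<close> by (simp add: divide_right_mono)
  have above_M: "T \<in> (\<Inter>k\<in>K. {c k<..})" if "M < T" for T
    using c_le_M that by force
  have "F = a k0 / (T1 - c k0)"
    unfolding T1_def using k0 a_pos[OF k0(1)] \<open>F > 0\<close> by simp
  also have "\<dots> \<le> pole_sum K a c T1"
    unfolding pole_sum_def using fin k0(1) above_M[OF \<open>M < T1\<close>] a_nonneg
    by (intro member_le_sum) auto
  finally have "F \<le> pole_sum K a c T1" .
  have "S > 0" using \<open>a k0 \<le> S\<close> a_pos[OF k0(1)] by simp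
  have "pole_sum K a c T2 \<le> (\<Sum>k\<in>K. a k / (S / F))"
    unfolding pole_sum_def
  proof (rule sum_mono)
    fix k assume k: "k \<in> K"
    have le: "S / F \<le> T2 - c k" using c_le_M[OF k] unfolding T2_def by simp
    have pos: "S / F > 0" using \<open>S > 0\<close> \<open>F > 0\<close> by simp
    show "a k / (T2 - c k) \<le> a k / (S / F)"
      using divide_left_mono[OF le a_nonneg[OF k] mult_pos_pos[OF _ pos]] le pos by linarith
  qed
  also have "\<dots> = S / (S / F)" unfolding S_def by (rule sum_divide_distrib[symmetric])
  also have "\<dots> = F" using \<open>S > 0\<close> \<open>F > 0\<close> by simp
  finally have "pole_sum K a c T2 \<le> F" .
  have "continuous_on {T1..T2} (pole_sum K a c)"
    unfolding pole_sum_def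
    using c_le_M \<open>M < T1\<close> by (intro continuous_intros) force
  then obtain T where "T1 \<le> T" "pole_sum K a c T = F"
    using IVT2'[OF \<open>pole_sum K a c T2 \<le> F\<close> \<open>F \<le> pole_sum K a c T1\<close> \<open>T1 \<le> T2\<close>] by blast
  moreover have "T \<in> (\<Inter>k\<in>K. {c k<..})" using above_M \<open>M < T1\<close> \<open>T1 \<le> T\<close> by simp
  ultimately show ?thesis by blast
qed

lemma T_theta_solves:
  assumes "finite K" "K \<noteq> {}" "\<And>k. k \<in> K \<Longrightarrow> a k > 0" "F > 0"
  shows "T_theta K a c F \<in> (\<Inter>k\<in>K. {c k<..})" and "pole_sum K a c (T_theta K a c F) = F"
proof -
  let ?D = "\<Inter>k\<in>K. {c k<..}"
  obtain T where T: "T \<in> ?D" "pole_sum K a c T = F"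
    using pole_sum_attains[where a = a and c = c, OF assms] by blast
  have inj: "inj_on (pole_sum K a c) ?D"
    using pole_sum_strict_antimono[where a = a and c = c, OF assms(1-3)] strict_antimono_iff_antimono
    by blast
  have "\<exists>!T. T \<in> ?D \<and> pole_sum K a c T = F"
  proof (rule ex1I[of _ T])
    show "T' = T" if "T' \<in> ?D \<and> pole_sum K a c T' = F" for T'
      using inj_onD[OF inj, of T' T] that T by simp
  qed (use T in simp)
  moreover have "T_theta K a c F = (THE T. T \<in> ?D \<and> pole_sum K a c T = F)"
    unfolding T_theta_def pole_sum_def by simp
  ultimately have "T_theta K a c F \<in> ?D \<and> pole_sum K a c (T_theta K a c F) = F"
    using theI' by simp
  then show "T_theta K a c F \<in> ?D" and "pole_sum K a c (T_theta K a c F) = F" by auto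
qed

lemma strictly_convex_on_right_inverse:
  fixes g h :: "real \<Rightarrow> real"
  assumes "convex D" "strictly_convex_on D g" "strict_antimono_on D g"
    and "convex S" "h ` S \<subseteq> D" "\<And>x. x \<in> S \<Longrightarrow> g (h x) = x"
  shows "strictly_convex_on S h"
  unfolding strictly_convex_on_def
proof (intro ballI allI impI)
  fix x y u :: real assume x: "x \<in> S" and y: "y \<in> S" and xyu: "x \<noteq> y \<and> 0 < u \<and> u < 1"
  define z where "z = u * x + (1 - u) * y"
  define Tm where "Tm = u * h x + (1 - u) * h y"
  have "z \<in> S" unfolding z_def using convexD[OF \<open>convex S\<close> x y, of u "1 - u"] xyu by simp
  have "h x \<in> D" "h y \<in> D" using x y \<open>h ` S \<subseteq> D\<close> by auto
  then have "Tm \<in> D" unfolding Tm_def using convexD[OF \<open>convex D\<close>, of "h x" "h y" u "1 - u"] xyu by simp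
  have "h x \<noteq> h y" using xyu assms(6)[OF x] assms(6)[OF y] by metis
  then have "g Tm < u * g (h x) + (1 - u) * g (h y)"
    using \<open>strictly_convex_on D g\<close> \<open>h x \<in> D\<close> \<open>h y \<in> D\<close> xyu
    unfolding Tm_def strictly_convex_on_def by blast
  also have "\<dots> = g (h z)" using x y \<open>z \<in> S\<close> assms(6) unfolding z_def by simp
  finally have "g Tm < g (h z)" .
  moreover have "h z \<in> D" using \<open>z \<in> S\<close> \<open>h ` S \<subseteq> D\<close> by auto
  ultimately have "\<not> Tm < h z"
    using \<open>Tm \<in> D\<close> monotone_onD[OF \<open>strict_antimono_on D g\<close>, of Tm "h z"] by fastforce
  moreover have "Tm \<noteq> h z" using \<open>g Tm < g (h z)\<close> by auto
  ultimately have "h z < Tm" by linarith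
  then show "h z < u * h x + (1 - u) * h y" unfolding Tm_def .
qed

theorem lemma5:
  fixes K :: "'k set"
    and I Bsz :: "'k \<Rightarrow> nat"
    and FC BC FS BS fC r Lam wC :: "'k \<Rightarrow> real"
    and a c :: "'k \<Rightarrow> real"
  assumes "finite K" and "K \<noteq> {}"
    and "\<And>k. k \<in> K \<Longrightarrow> FC k \<ge> 0" and "\<And>k. k \<in> K \<Longrightarrow> BC k \<ge> 0"
    and "\<And>k. k \<in> K \<Longrightarrow> FS k \<ge> 0" and "\<And>k. k \<in> K \<Longrightarrow> BS k \<ge> 0"
    and "\<And>k. k \<in> K \<Longrightarrow> fC k > 0" and "\<And>k. k \<in> K \<Longrightarrow> r k > 0"
    and "\<And>k. k \<in> K \<Longrightarrow> Lam k \<ge> 0" and "\<And>k. k \<in> K \<Longrightarrow> wC k \<ge> 0"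
    and a_def: "\<And>k. a k = real (I k) * real (Bsz k) * (FS k + BS k)"
    and c_def: "\<And>k. c k = real (I k) * real (Bsz k) * (FC k + BC k) / fC k
                   + 2 * (real (I k) * real (Bsz k) * Lam k + wC k) / r k"
    and a_pos: "\<And>k. k \<in> K \<Longrightarrow> a k > 0"
  shows "strictly_convex_on {0<..} (\<lambda>Fmax. T_theta K a c Fmax)"
proof (rule strictly_convex_on_right_inverse)
  show "strictly_convex_on (\<Inter>k\<in>K. {c k<..}) (pole_sum K a c)"
    using pole_sum_strictly_convex[where a = a and c = c, OF assms(1,2) a_pos] .
  show "strict_antimono_on (\<Inter>k\<in>K. {c k<..}) (pole_sum K a c)"
    using pole_sum_strict_antimono[where a = a and c = c, OF assms(1,2) a_pos] .
  show "T_theta K a c ` {0<..} \<subseteq> (\<Inter>k\<in>K. {c k<..})"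
    using T_theta_solves(1)[where a = a and c = c, OF assms(1,2) a_pos] by auto
  show "pole_sum K a c (T_theta K a c F) = F" if "F \<in> {0<..}" for F
    using T_theta_solves(2)[where a = a and c = c, OF assms(1,2) a_pos] that by simp
qed (auto intro: convex_INT)

end
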